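(* Let $m\in\mathbb N$, $S$ a set of nonempty subsets of $\{0,\dots,m\}$, $(\beta_\sigma)_{\sigma\in S}$ elements of an ordered abelian group $G$, $(t_e)_{0\le e\le m}$ positive integers, and for $0\le e\le m$ let $(\gamma_{e,j})_{j<\lambda_e}$ ($\lambda_e$ a limit ordinal) be a well-ordered, monotone increasing family of elements $\ge0$ of $G$ without last element. For ordinals $j_e<\lambda_e$ and $\sigma\in S$ put $P_{\sigma,j_\sigma}=\beta_\sigma+\sum_{e\in\sigma}t_e\gamma_{e,j_e}$, where $j_\sigma=(j_e)_{e\in\sigma}$. Then for any ordinals $\rho_e<\lambda_e$ ($0\le e\le m$) there exist ordinals $\rho_e<j_e<\lambda_e$ ($0\le e\le m$) such that the elements $P_{\sigma,j_\sigma}$, $\sigma\in S$, are pairwise different. *)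

theory Defs
  imports Main
begin

definition natmul :: "nat \<Rightarrow> 'a::comm_monoid_add \<Rightarrow> 'a" where
  "natmul n x = (\<Sum>_<n. x)"

definition Pval :: "(nat set \<Rightarrow> 'g::ordered_ab_group_add) \<Rightarrow> (nat \<Rightarrow> nat) \<Rightarrow>
    (nat \<Rightarrow> 'i \<Rightarrow> 'g) \<Rightarrow> nat set \<Rightarrow> (nat \<Rightarrow> 'i) \<Rightarrow> 'g" where
  "Pval \<beta> t \<gamma> \<sigma> j = \<beta> \<sigma> + (\<Sum>e\<in>\<sigma>. natmul (t e) (\<gamma> e (j e)))"

end

theory Submission
  imports Defs
begin

text \<open>The indices j e are chosen one coordinate at a time. Once j e is fixed for all e < n,
  the map \<sigma> \<mapsto> (partial sum of P over \<sigma> \<inter> {..<n}, \<sigma> - {..<n}) is injective on S.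
  Since k \<mapsto> t n \<cdot> \<gamma> n k is injective on J n and J n has no largest element, j n can be
  taken above \<rho> n so that t n \<cdot> \<gamma> n (j n) is none of the finitely many differences of
  partial sums; then injectivity persists from n to n + 1, and at n = m + 1 the tails are
  empty.\<close>

lemma natmul_strict_mono:
  assumes "0 < n"
  shows "strict_mono (natmul n :: 'a::strict_ordered_comm_monoid_add \<Rightarrow> 'a)"
  using assms by (auto intro!: strict_monoI sum_strict_mono simp: natmul_def)

lemma exists_greater_avoiding:
  fixes f :: "'i::linorder \<Rightarrow> 'b"
  assumes "inj_on f J" "finite D" "r \<in> J" "\<forall>i\<in>J. \<exists>k\<in>J. i < k"
  shows "\<exists>k\<in>J. r < k \<and> f k \<notin> D"
proof -
  have "infinite {k\<in>J. r < k}"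
  proof (rule infinite_growing)
    show "{k\<in>J. r < k} \<noteq> {}" using assms(3,4) by blast
    show "\<exists>y\<in>{k\<in>J. r < k}. y > x" if "x \<in> {k\<in>J. r < k}" for x
      using that assms(4) less_trans by blast
  qed
  moreover have "finite (f -` D \<inter> J)"
    using finite_vimage_IntI[OF assms(2,1)] .
  ultimately have "infinite ({k\<in>J. r < k} - (f -` D \<inter> J))"
    by (rule Diff_infinite_finite[rotated])
  then obtain k where "k \<in> {k\<in>J. r < k} - (f -` D \<inter> J)"
    by (metis ex_in_conv finite.emptyI)
  then show ?thesis by blast
qed

lemma inj_on_add_if:
  fixes q :: "'a \<Rightarrow> 'g::ab_group_add"
  assumes inj: "inj_on (\<lambda>x. (q x, P x, T x)) S"
    and avoid: "\<forall>x\<in>S. \<forall>y\<in>S. c \<noteq> q x - q y"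
  shows "inj_on (\<lambda>x. (q x + (if P x then c else 0), T x)) S"
proof (rule inj_onI)
  fix x y
  assume xy: "x \<in> S" "y \<in> S"
    and eq: "(q x + (if P x then c else 0), T x) = (q y + (if P y then c else 0), T y)"
  have "P x = P y"
  proof (rule ccontr)
    assume "P x \<noteq> P y"
    then have "c = q y - q x \<or> c = q x - q y"
      using eq by (auto simp: algebra_simps split: if_splits)
    then show False using avoid xy by blast
  qed
  then show "x = y"
    using eq inj_onD[OF inj _ xy] by (auto split: if_splits)
qed

lemma sum_Int_lessThan_Suc:
  "(\<Sum>e\<in>\<sigma> \<inter> {..<Suc n}. g e) = (\<Sum>e\<in>\<sigma> \<inter> {..<n}. g e) + (if n \<in> \<sigma> then g n else 0)"
proof -
  have "\<sigma> \<inter> {..<Suc n} = (if n \<in> \<sigma> then insert n (\<sigma> \<inter> {..<n}) else \<sigma> \<inter> {..<n})"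
    by (auto simp: less_Suc_eq)
  then show ?thesis by (simp add: add.commute)
qed

lemma exists_greater_inj_on_partial_sums:
  fixes f :: "nat \<Rightarrow> 'i::linorder \<Rightarrow> 'g::ab_group_add"
    and S :: "nat set set"
  assumes "finite S"
    and f_inj: "\<forall>e<n. inj_on (f e) (J e)"
    and \<rho>_in: "\<forall>e<n. \<rho> e \<in> J e"
    and J_unbounded: "\<forall>e<n. \<forall>i\<in>J e. \<exists>k\<in>J e. i < k"
  shows "\<exists>j. (\<forall>e<n. j e \<in> J e \<and> \<rho> e < j e) \<and>
    inj_on (\<lambda>\<sigma>. (\<beta> \<sigma> + (\<Sum>e\<in>\<sigma> \<inter> {..<n}. f e (j e)), \<sigma> - {..<n})) S"
  using f_inj \<rho>_in J_unbounded
proof (induction n)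
  case 0
  show ?case by (auto intro: inj_onI)
next
  case (Suc n)
  then obtain j where j: "\<forall>e<n. j e \<in> J e \<and> \<rho> e < j e"
    and inj: "inj_on (\<lambda>\<sigma>. (\<beta> \<sigma> + (\<Sum>e\<in>\<sigma> \<inter> {..<n}. f e (j e)), \<sigma> - {..<n})) S"
    by auto
  define q where "q \<sigma> = \<beta> \<sigma> + (\<Sum>e\<in>\<sigma> \<inter> {..<n}. f e (j e))" for \<sigma>
  have "finite ((\<lambda>(\<sigma>, \<tau>). q \<sigma> - q \<tau>) ` (S \<times> S))"
    using \<open>finite S\<close> by simp
  moreover have "inj_on (f n) (J n)" "\<rho> n \<in> J n" "\<forall>i\<in>J n. \<exists>k\<in>J n. i < k"
    using Suc.prems by auto
  ultimately obtain k where k: "k \<in> J n" "\<rho> n < k"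
    and avoid: "f n k \<notin> (\<lambda>(\<sigma>, \<tau>). q \<sigma> - q \<tau>) ` (S \<times> S)"
    using exists_greater_avoiding[of "f n" "J n"] by blast
  have "inj_on (\<lambda>\<sigma>. (q \<sigma>, n \<in> \<sigma>, \<sigma> - {..<Suc n})) S"
  proof (rule inj_on_imageI2[of "\<lambda>(x, b, T). (x, if b then insert n T else T)"])
    have "(\<lambda>(x, b, T). (x, if b then insert n T else T)) \<circ> (\<lambda>\<sigma>. (q \<sigma>, n \<in> \<sigma>, \<sigma> - {..<Suc n}))
        = (\<lambda>\<sigma>. (q \<sigma>, \<sigma> - {..<n}))"
      by (auto simp: fun_eq_iff less_Suc_eq)
    then show "inj_on ((\<lambda>(x, b, T). (x, if b then insert n T else T)) \<circ>
        (\<lambda>\<sigma>. (q \<sigma>, n \<in> \<sigma>, \<sigma> - {..<Suc n}))) S"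
      using inj by (simp only: q_def)
  qed
  then have "inj_on (\<lambda>\<sigma>. (q \<sigma> + (if n \<in> \<sigma> then f n k else 0), \<sigma> - {..<Suc n})) S"
    by (rule inj_on_add_if) (use avoid in force)
  moreover have "\<beta> \<sigma> + (\<Sum>e\<in>\<sigma> \<inter> {..<Suc n}. f e ((j(n := k)) e))
      = q \<sigma> + (if n \<in> \<sigma> then f n k else 0)" for \<sigma>
    unfolding q_def sum_Int_lessThan_Suc by (simp add: add.assoc)
  ultimately have "inj_on (\<lambda>\<sigma>. (\<beta> \<sigma> + (\<Sum>e\<in>\<sigma> \<inter> {..<Suc n}. f e ((j(n := k)) e)),
      \<sigma> - {..<Suc n})) S"
    by simp
  moreover have "\<forall>e<Suc n. (j(n := k)) e \<in> J e \<and> \<rho> e < (j(n := k)) e"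
    using j k by (auto simp: less_Suc_eq)
  ultimately show ?case by (intro exI[of _ "j(n := k)"] conjI)
qed

lemma exists_greater_inj_on_sums:
  fixes f :: "nat \<Rightarrow> 'i::linorder \<Rightarrow> 'g::ab_group_add"
    and S :: "nat set set"
  assumes S_sub: "S \<subseteq> Pow {..<n}"
    and "\<forall>e<n. inj_on (f e) (J e)"
    and "\<forall>e<n. \<rho> e \<in> J e"
    and "\<forall>e<n. \<forall>i\<in>J e. \<exists>k\<in>J e. i < k"
  shows "\<exists>j. (\<forall>e<n. j e \<in> J e \<and> \<rho> e < j e) \<and> inj_on (\<lambda>\<sigma>. \<beta> \<sigma> + (\<Sum>e\<in>\<sigma>. f e (j e))) S"
proof -
  have "finite S" using finite_subset[OF S_sub] by simp
  then obtain j where j: "\<forall>e<n. j e \<in> J e \<and> \<rho> e < j e"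
    and inj: "inj_on (\<lambda>\<sigma>. (\<beta> \<sigma> + (\<Sum>e\<in>\<sigma> \<inter> {..<n}. f e (j e)), \<sigma> - {..<n})) S"
    using exists_greater_inj_on_partial_sums[of S n f J \<rho> \<beta>] assms(2-4) by blast
  have "inj_on (\<lambda>\<sigma>. \<beta> \<sigma> + (\<Sum>e\<in>\<sigma>. f e (j e))) S"
  proof (rule inj_onI)
    fix \<sigma> \<tau>
    assume S: "\<sigma> \<in> S" "\<tau> \<in> S"
      and eq: "\<beta> \<sigma> + (\<Sum>e\<in>\<sigma>. f e (j e)) = \<beta> \<tau> + (\<Sum>e\<in>\<tau>. f e (j e))"
    have "\<sigma> \<inter> {..<n} = \<sigma>" "\<tau> \<inter> {..<n} = \<tau>" "\<sigma> - {..<n} = \<tau> - {..<n}"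
      using S S_sub by auto
    then show "\<sigma> = \<tau>"
      using inj_onD[OF inj _ S] eq by simp
  qed
  with j show ?thesis by blast
qed

theorem lemma2p1:
  fixes m :: nat
    and S :: "nat set set"
    and \<beta> :: "nat set \<Rightarrow> 'g::linordered_ab_group_add"
    and t :: "nat \<Rightarrow> nat"
    and J :: "nat \<Rightarrow> 'i::wellorder set"
    and \<gamma> :: "nat \<Rightarrow> 'i \<Rightarrow> 'g"
    and \<rho> :: "nat \<Rightarrow> 'i"
  assumes S_sub: "\<forall>\<sigma>\<in>S. \<sigma> \<noteq> {} \<and> \<sigma> \<subseteq> {0..m}"
    and t_pos: "\<forall>e\<le>m. t e > 0"
    and J_limit: "\<forall>e\<le>m. J e \<noteq> {} \<and> (\<forall>i\<in>J e. \<exists>k\<in>J e. i < k)"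
    and \<gamma>_mono: "\<forall>e\<le>m. strict_mono_on (J e) (\<gamma> e)"
    and \<gamma>_nonneg: "\<forall>e\<le>m. \<forall>i\<in>J e. \<gamma> e i \<ge> 0"
    and \<rho>_in: "\<forall>e\<le>m. \<rho> e \<in> J e"
  shows "\<exists>j. (\<forall>e\<le>m. j e \<in> J e \<and> \<rho> e < j e) \<and>
             inj_on (\<lambda>\<sigma>. Pval \<beta> t \<gamma> \<sigma> j) S"
proof -
  have "inj_on (\<lambda>k. natmul (t e) (\<gamma> e k)) (J e)" if "e < Suc m" for e
  proof (rule strict_mono_on_imp_inj_on, rule strict_mono_onI)
    fix a b
    assume "a \<in> J e" "b \<in> J e" "a < b"
    moreover have "e \<le> m" using \<open>e < Suc m\<close> by simp
    ultimately have "0 < t e" "\<gamma> e a < \<gamma> e b"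
      using t_pos \<gamma>_mono by (auto dest: strict_mono_onD)
    then show "natmul (t e) (\<gamma> e a) < natmul (t e) (\<gamma> e b)"
      by (rule strict_monoD[OF natmul_strict_mono])
  qed
  moreover have "S \<subseteq> Pow {..<Suc m}"
    using S_sub by (fastforce simp: lessThan_Suc_atMost)
  ultimately show ?thesis
    using exists_greater_inj_on_sums[of S "Suc m" "\<lambda>e k. natmul (t e) (\<gamma> e k)" J \<rho> \<beta>]
      J_limit \<rho>_in by (simp add: less_Suc_eq_le Pval_def)
qed

end
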